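(* The map $\alpha_M\colon M\otimes U_0\to U_0$, $(i,j)\otimes(r,s)\mapsto\big(\frac13(i+r),\frac13(j+s)\big)$, is an injective morphism of $\mathsf{SquaMS}$. Thus $(U_0,\alpha_M)$ is an injective $M\otimes-$ algebra.
   Context: Let $M_0=\{(r,s)\in[0,1]^2: r\in\{0,1\}\text{ or } s\in\{0,1\}\}$. A square metric space is a pair $(X,S_X)$ with $X$ a metric space with all distances at most $2$ and $S_X\colon M_0\to X$ injective such that (sq1) for $i\in\{0,1\}$, $r,s\in[0,1]$: $d_X(S_X(i,r),S_X(i,s))=|s-r|$ and $d_X(S_X(r,i),S_X(s,i))=|s-r|$; (sq2) $d_X(S_X(r,s),S_X(t,u))\ge|r-t|+|s-u|$. $\mathsf{SquaMS}$: these objects, with short maps $f$ satisfying $f\circ S_X=S_Y$ as morphisms. Let $N=\{0,1,2\}^2$, $M=N\setminus\{(1,1)\}$, also viewed as points of $\mathbb{R}^2$. For $X$ in $\mathsf{SquaMS}$, $M\otimes X=(M\times X)/\!\sim$, where $\sim$ is generated by $(m,S_X(p))\sim(n,S_X(q))$ whenever $m,n\in M$ differ by exactly $1$ in exactly one coordinate and $(m+p)/3=(n+q)/3$; $m\otimes x$ is the class of $(m,x)$. With $d((a,u),(b,v))=\frac13 d_X(u,v)$ if $a=b$ and $2$ otherwise, $M\otimes X$ has the quotient metric (infimum over finite chains of sums of consecutive distances, $\sim$-related consecutive pairs counting $0$). $S_{M\otimes X}(p)=m\otimes S_X(3p-m)$ for any $m\in M$ with $p\in(m+[0,1]^2)/3$.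 $U_0=[0,1]^2$ with the taxicab metric $|x-x'|+|y-y'|$ and $S_{U_0}$ the inclusion of $M_0$. *)

theory Defs
  imports "HOL-Analysis.Analysis"
begin

definition M0 :: "(real \<times> real) set" where
  "M0 = {(r, s). 0 \<le> r \<and> r \<le> 1 \<and> 0 \<le> s \<and> s \<le> 1 \<and> (r \<in> {0, 1} \<or> s \<in> {0, 1})}"

definition square_metric_space ::
    "'a set \<Rightarrow> ('a \<Rightarrow> 'a \<Rightarrow> real) \<Rightarrow> (real \<times> real \<Rightarrow> 'a) \<Rightarrow> bool" where
  "square_metric_space X d S \<longleftrightarrow>
     Metric_space X d \<and>
     (\<forall>x\<in>X. \<forall>y\<in>X. d x y \<le> 2) \<and>
     S ` M0 \<subseteq> X \<and> inj_on S M0 \<and>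
     (\<forall>i\<in>{0, 1}. \<forall>r\<in>{0..1}. \<forall>s\<in>{0..1}.
        d (S (i, r)) (S (i, s)) = \<bar>s - r\<bar> \<and> d (S (r, i)) (S (s, i)) = \<bar>s - r\<bar>) \<and>
     (\<forall>p\<in>M0. \<forall>q\<in>M0. d (S p) (S q) \<ge> \<bar>fst p - fst q\<bar> + \<bar>snd p - snd q\<bar>)"

definition squams_morphism ::
    "'a set \<Rightarrow> ('a \<Rightarrow> 'a \<Rightarrow> real) \<Rightarrow> (real \<times> real \<Rightarrow> 'a) \<Rightarrow>
     'b set \<Rightarrow> ('b \<Rightarrow> 'b \<Rightarrow> real) \<Rightarrow> (real \<times> real \<Rightarrow> 'b) \<Rightarrow> ('a \<Rightarrow> 'b) \<Rightarrow> bool" where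
  "squams_morphism X dX SX Y dY SY f \<longleftrightarrow>
     square_metric_space X dX SX \<and> square_metric_space Y dY SY \<and>
     f ` X \<subseteq> Y \<and>
     (\<forall>x\<in>X. \<forall>y\<in>X. dY (f x) (f y) \<le> dX x y) \<and>
     (\<forall>p\<in>M0. f (SX p) = SY p)"

definition Mset :: "(int \<times> int) set" where
  "Mset = ({0..2} \<times> {0..2}) - {(1, 1)}"

definition tens_gen ::
    "'a set \<Rightarrow> (real \<times> real \<Rightarrow> 'a) \<Rightarrow> (int \<times> int) \<times> 'a \<Rightarrow> (int \<times> int) \<times> 'a \<Rightarrow> bool" where
  "tens_gen X S z w \<longleftrightarrow>
     (\<exists>m n p q. z = (m, S p) \<and> w = (n, S q) \<and> m \<in> Mset \<and> n \<in> Mset \<and> p \<in> M0 \<and> q \<in> M0 \<and>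
        \<bar>fst m - fst n\<bar> + \<bar>snd m - snd n\<bar> = 1 \<and>
        (real_of_int (fst m) + fst p) / 3 = (real_of_int (fst n) + fst q) / 3 \<and>
        (real_of_int (snd m) + snd p) / 3 = (real_of_int (snd n) + snd q) / 3)"

definition tens_rel ::
    "'a set \<Rightarrow> (real \<times> real \<Rightarrow> 'a) \<Rightarrow> (int \<times> int) \<times> 'a \<Rightarrow> (int \<times> int) \<times> 'a \<Rightarrow> bool" where
  "tens_rel X S z w \<longleftrightarrow>
     z \<in> Mset \<times> X \<and> w \<in> Mset \<times> X \<and>
     (\<lambda>a b. tens_gen X S a b \<or> tens_gen X S b a)\<^sup>*\<^sup>* z w"

definition tens_class ::
    "'a set \<Rightarrow> (real \<times> real \<Rightarrow> 'a) \<Rightarrow> (int \<times> int) \<times> 'a \<Rightarrow> ((int \<times> int) \<times> 'a) set" where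
  "tens_class X S z = {w. tens_rel X S z w}"

definition tens_carrier ::
    "'a set \<Rightarrow> (real \<times> real \<Rightarrow> 'a) \<Rightarrow> ((int \<times> int) \<times> 'a) set set" where
  "tens_carrier X S = tens_class X S ` (Mset \<times> X)"

definition tens_base ::
    "('a \<Rightarrow> 'a \<Rightarrow> real) \<Rightarrow> (int \<times> int) \<times> 'a \<Rightarrow> (int \<times> int) \<times> 'a \<Rightarrow> real" where
  "tens_base d z w = (if fst z = fst w then d (snd z) (snd w) / 3 else 2)"

definition chain_cost ::
    "'a set \<Rightarrow> ('a \<Rightarrow> 'a \<Rightarrow> real) \<Rightarrow> (real \<times> real \<Rightarrow> 'a) \<Rightarrow> ((int \<times> int) \<times> 'a) list \<Rightarrow> real" where
  "chain_cost X d S zs =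
     sum_list (map (\<lambda>(a, b). if tens_rel X S a b then 0 else tens_base d a b) (zip zs (tl zs)))"

definition tens_dist ::
    "'a set \<Rightarrow> ('a \<Rightarrow> 'a \<Rightarrow> real) \<Rightarrow> (real \<times> real \<Rightarrow> 'a) \<Rightarrow>
     ((int \<times> int) \<times> 'a) set \<Rightarrow> ((int \<times> int) \<times> 'a) set \<Rightarrow> real" where
  "tens_dist X d S A B =
     (if A \<in> tens_carrier X S \<and> B \<in> tens_carrier X S then
        Inf {chain_cost X d S zs | zs. zs \<noteq> [] \<and> set zs \<subseteq> Mset \<times> X \<and> hd zs \<in> A \<and> last zs \<in> B}
      else 0)"

definition tens_S ::
    "'a set \<Rightarrow> (real \<times> real \<Rightarrow> 'a) \<Rightarrow> real \<times> real \<Rightarrow> ((int \<times> int) \<times> 'a) set" where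
  "tens_S X S p =
     (let m = (SOME m. m \<in> Mset \<and>
                  0 \<le> 3 * fst p - real_of_int (fst m) \<and> 3 * fst p - real_of_int (fst m) \<le> 1 \<and>
                  0 \<le> 3 * snd p - real_of_int (snd m) \<and> 3 * snd p - real_of_int (snd m) \<le> 1)
      in tens_class X S (m, S (3 * fst p - real_of_int (fst m), 3 * snd p - real_of_int (snd m))))"

definition U0 :: "(real \<times> real) set" where
  "U0 = {0..1} \<times> {0..1}"

definition dU0 :: "real \<times> real \<Rightarrow> real \<times> real \<Rightarrow> real" where
  "dU0 x y = \<bar>fst x - fst y\<bar> + \<bar>snd x - snd y\<bar>"

definition SU0 :: "real \<times> real \<Rightarrow> real \<times> real" where
  "SU0 p = p"

definition alpha_pre :: "(int \<times> int) \<times> (real \<times> real) \<Rightarrow> real \<times> real" where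
  "alpha_pre z = ((real_of_int (fst (fst z)) + fst (snd z)) / 3,
                  (real_of_int (snd (fst z)) + snd (snd z)) / 3)"

definition alpha_M :: "((int \<times> int) \<times> (real \<times> real)) set \<Rightarrow> real \<times> real" where
  "alpha_M A = alpha_pre (SOME z. z \<in> A)"

end

theory Submission
  imports Defs
begin

(*
  alpha_pre identifies exactly the ~-related points of M x U0: two points with the same image
  lie in cells sharing a side, or in diagonal cells linked through a common neighbour. Hence
  alpha_M is well defined and injective.

  Each chain step moves alpha_pre by at most its cost (d/3 inside one cell, at most 2 across
  cells), so alpha_M is short for the quotient metric, which is therefore a metric.
  Conversely, a boundary edge of the square splits at 1/3 and 2/3 into pieces inside single
  cells, where the quotient distance is at most the taxicab distance. Together these give the
  square metric axioms of M (x) U0 and show that alpha_M commutes with the boundary maps.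
*)

section \<open>The relation generating M (x) X\<close>

lemma tens_rel_iff_equivclp:
  "tens_rel X S z w \<longleftrightarrow> z \<in> Mset \<times> X \<and> w \<in> Mset \<times> X \<and> equivclp (tens_gen X S) z w"
  unfolding tens_rel_def equivclp_def symclp_def[abs_def] by simp

lemma tens_rel_refl: "z \<in> Mset \<times> X \<Longrightarrow> tens_rel X S z z"
  by (simp add: tens_rel_iff_equivclp)

lemma tens_rel_sym: "tens_rel X S z w \<Longrightarrow> tens_rel X S w z"
  by (auto simp: tens_rel_iff_equivclp intro: equivclp_sym)

lemma tens_rel_trans: "tens_rel X S z w \<Longrightarrow> tens_rel X S w v \<Longrightarrow> tens_rel X S z v"
  by (auto simp: tens_rel_iff_equivclp intro: equivclp_trans)

lemma mem_tens_class_iff: "w \<in> tens_class X S z \<longleftrightarrow> tens_rel X S z w"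
  unfolding tens_class_def by simp

lemma tens_class_self: "z \<in> Mset \<times> X \<Longrightarrow> z \<in> tens_class X S z"
  by (simp add: mem_tens_class_iff tens_rel_refl)

lemma tens_class_eq: "tens_rel X S z w \<Longrightarrow> tens_class X S z = tens_class X S w"
  unfolding tens_class_def by (blast intro: tens_rel_sym tens_rel_trans)

lemma tens_carrierE:
  assumes "A \<in> tens_carrier X S"
  obtains z where "z \<in> Mset \<times> X" "z \<in> A" "A = tens_class X S z"
  using assms tens_class_self unfolding tens_carrier_def by blast

lemma tens_rel_in_class:
  assumes "A \<in> tens_carrier X S" "z \<in> A" "w \<in> A"
  shows "tens_rel X S z w"
  using assms by (elim tens_carrierE) (metis mem_tens_class_iff tens_rel_sym tens_rel_trans)

section \<open>The quotient metric\<close>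

definition tens_step ::
    "'a set \<Rightarrow> ('a \<Rightarrow> 'a \<Rightarrow> real) \<Rightarrow> (real \<times> real \<Rightarrow> 'a) \<Rightarrow>
     (int \<times> int) \<times> 'a \<Rightarrow> (int \<times> int) \<times> 'a \<Rightarrow> real" where
  "tens_step X d S a b = (if tens_rel X S a b then 0 else tens_base d a b)"

lemma chain_cost_simps [simp]:
  "chain_cost X d S [] = 0"
  "chain_cost X d S [a] = 0"
  "chain_cost X d S (a # b # zs) = tens_step X d S a b + chain_cost X d S (b # zs)"
  unfolding chain_cost_def tens_step_def by simp_all

lemma chain_cost_append:
  assumes "xs \<noteq> []" "ys \<noteq> []"
  shows "chain_cost X d S (xs @ ys) =
           chain_cost X d S xs + tens_step X d S (last xs) (hd ys) + chain_cost X d S ys"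
  using assms(1)
proof (induction xs rule: list_nonempty_induct)
  case (single x)
  then show ?case using assms(2) by (cases ys) simp_all
next
  case (cons x xs)
  then show ?case by (cases xs) simp_all
qed

definition tens_chains ::
    "'a set \<Rightarrow> ((int \<times> int) \<times> 'a) set \<Rightarrow> ((int \<times> int) \<times> 'a) set \<Rightarrow> ((int \<times> int) \<times> 'a) list set" where
  "tens_chains X A B = {zs. zs \<noteq> [] \<and> set zs \<subseteq> Mset \<times> X \<and> hd zs \<in> A \<and> last zs \<in> B}"

lemma tens_dist_eq_Inf:
  assumes "A \<in> tens_carrier X S" "B \<in> tens_carrier X S"
  shows "tens_dist X d S A B = Inf (chain_cost X d S ` tens_chains X A B)"
  using assms unfolding tens_dist_def tens_chains_def by (simp add: setcompr_eq_image)

lemma tens_chains_nonempty: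
  assumes "A \<in> tens_carrier X S" "B \<in> tens_carrier X S"
  shows "tens_chains X A B \<noteq> {}"
proof -
  obtain a b where "a \<in> Mset \<times> X" "a \<in> A" "b \<in> Mset \<times> X" "b \<in> B"
    using assms by (metis tens_carrierE)
  then have "[a, b] \<in> tens_chains X A B" unfolding tens_chains_def by simp
  then show ?thesis by blast
qed

lemma rev_in_tens_chains: "zs \<in> tens_chains X A B \<Longrightarrow> rev zs \<in> tens_chains X B A"
  unfolding tens_chains_def by (auto simp: hd_rev last_rev)

lemma append_in_tens_chains:
  "xs \<in> tens_chains X A B \<Longrightarrow> ys \<in> tens_chains X B C \<Longrightarrow> xs @ ys \<in> tens_chains X A C"
  unfolding tens_chains_def by auto

context Metric_space
begin

lemma tens_step_nonneg: "0 \<le> tens_step M d S a b"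
  unfolding tens_step_def tens_base_def by simp

lemma tens_step_commute: "tens_step M d S a b = tens_step M d S b a"
  using tens_rel_sym[of M S a b] tens_rel_sym[of M S b a] commute[of "snd a" "snd b"]
  unfolding tens_step_def tens_base_def by auto

lemma chain_cost_nonneg: "0 \<le> chain_cost M d S zs"
  by (induction zs rule: induct_list012) (simp_all add: tens_step_nonneg)

lemma chain_cost_rev: "chain_cost M d S (rev zs) = chain_cost M d S zs"
proof (induction zs rule: induct_list012)
  case (3 a b zs)
  have "chain_cost M d S (rev (a # b # zs)) = chain_cost M d S (rev (b # zs) @ [a])"
    by simp
  also have "\<dots> = chain_cost M d S (b # zs) + tens_step M d S b a"
    using chain_cost_append[of "rev (b # zs)" "[a]"] 3 by (simp add: last_rev)
  finally show ?case by (simp add: tens_step_commute)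
qed simp_all

lemma tens_dist_le_chain_cost:
  assumes "A \<in> tens_carrier M S" "B \<in> tens_carrier M S" "zs \<in> tens_chains M A B"
  shows "tens_dist M d S A B \<le> chain_cost M d S zs"
  unfolding tens_dist_eq_Inf[OF assms(1,2)]
  by (rule cInf_lower) (auto intro: assms(3) bdd_belowI[of _ 0] chain_cost_nonneg)

lemma tens_dist_greatest:
  assumes "A \<in> tens_carrier M S" "B \<in> tens_carrier M S"
    and "\<And>zs. zs \<in> tens_chains M A B \<Longrightarrow> c \<le> chain_cost M d S zs"
  shows "c \<le> tens_dist M d S A B"
  unfolding tens_dist_eq_Inf[OF assms(1,2)]
  using tens_chains_nonempty[OF assms(1,2)] assms(3) by (auto intro: cInf_greatest)

lemma tens_dist_nonneg: "0 \<le> tens_dist M d S A B"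
proof (cases "A \<in> tens_carrier M S \<and> B \<in> tens_carrier M S")
  case True
  then show ?thesis using tens_dist_greatest chain_cost_nonneg by blast
qed (auto simp: tens_dist_def)

lemma tens_dist_commute: "tens_dist M d S A B = tens_dist M d S B A"
proof -
  have "tens_dist M d S A B \<le> tens_dist M d S B A"
    if "A \<in> tens_carrier M S" "B \<in> tens_carrier M S" for A B
    using that by (metis tens_dist_greatest tens_dist_le_chain_cost rev_in_tens_chains chain_cost_rev)
  then show ?thesis
    by (cases "A \<in> tens_carrier M S \<and> B \<in> tens_carrier M S")
      (auto intro: order_antisym simp: tens_dist_def)
qed

lemma tens_dist_self:
  assumes "A \<in> tens_carrier M S"
  shows "tens_dist M d S A A = 0"
proof -
  obtain a where "a \<in> Mset \<times> M" "a \<in> A" using assms by (rule tens_carrierE)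
  then have "[a] \<in> tens_chains M A A" unfolding tens_chains_def by simp
  then show ?thesis
    using tens_dist_le_chain_cost[OF assms assms] tens_dist_nonneg by (metis chain_cost_simps(2) order_antisym)
qed

lemma tens_dist_triangle:
  assumes A: "A \<in> tens_carrier M S" and B: "B \<in> tens_carrier M S" and C: "C \<in> tens_carrier M S"
  shows "tens_dist M d S A C \<le> tens_dist M d S A B + tens_dist M d S B C"
proof -
  have concat: "tens_dist M d S A C \<le> chain_cost M d S xs + chain_cost M d S ys"
    if xs: "xs \<in> tens_chains M A B" and ys: "ys \<in> tens_chains M B C" for xs ys
  proof -
    have "tens_rel M S (last xs) (hd ys)"
      using xs ys B tens_rel_in_class unfolding tens_chains_def by blast
    moreover have "xs \<noteq> []" "ys \<noteq> []" using xs ys unfolding tens_chains_def by auto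
    ultimately have "chain_cost M d S (xs @ ys) = chain_cost M d S xs + chain_cost M d S ys"
      using chain_cost_append[of xs ys M d S] unfolding tens_step_def by simp
    then show ?thesis
      using tens_dist_le_chain_cost[OF A C append_in_tens_chains[OF xs ys]] by simp
  qed
  have "tens_dist M d S A C - tens_dist M d S B C \<le> chain_cost M d S xs"
    if xs: "xs \<in> tens_chains M A B" for xs
    using tens_dist_greatest[OF B C, of "tens_dist M d S A C - chain_cost M d S xs"] concat[OF xs]
    by fastforce
  then show ?thesis using tens_dist_greatest[OF A B] by fastforce
qed

lemma tens_dist_tens_class_le:
  assumes "m \<in> Mset" "x \<in> M" "y \<in> M"
  shows "tens_dist M d S (tens_class M S (m, x)) (tens_class M S (m, y)) \<le> d x y / 3"
proof -
  have chain: "[(m, x), (m, y)] \<in> tens_chains M (tens_class M S (m, x)) (tens_class M S (m, y))"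
    using assms unfolding tens_chains_def by (simp add: tens_class_self)
  have "tens_step M d S (m, x) (m, y) \<le> d x y / 3"
    unfolding tens_step_def tens_base_def by simp
  then show ?thesis
    using tens_dist_le_chain_cost[OF _ _ chain] assms unfolding tens_carrier_def by fastforce
qed

lemma tens_dist_le_2:
  assumes "\<And>x y. x \<in> M \<Longrightarrow> y \<in> M \<Longrightarrow> d x y \<le> 6"
    and A: "A \<in> tens_carrier M S" and B: "B \<in> tens_carrier M S"
  shows "tens_dist M d S A B \<le> 2"
proof -
  obtain a b where a: "a \<in> Mset \<times> M" "a \<in> A" and b: "b \<in> Mset \<times> M" "b \<in> B"
    using A B by (metis tens_carrierE)
  then have "[a, b] \<in> tens_chains M A B" unfolding tens_chains_def by simp
  moreover have "tens_step M d S a b \<le> 2"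
    using assms(1) a b unfolding tens_step_def tens_base_def by fastforce
  ultimately show ?thesis using tens_dist_le_chain_cost[OF A B] by fastforce
qed

lemma tens_dist_lower_bound:
  assumes Y: "Metric_space Y e" and g: "g ` (Mset \<times> M) \<subseteq> Y"
    and short: "\<And>a b. a \<in> Mset \<times> M \<Longrightarrow> b \<in> Mset \<times> M \<Longrightarrow> e (g a) (g b) \<le> tens_step M d S a b"
    and A: "A \<in> tens_carrier M S" and B: "B \<in> tens_carrier M S" and "a \<in> A" "b \<in> B"
  shows "e (g a) (g b) \<le> tens_dist M d S A B"
proof -
  have chain: "e (g (hd zs)) (g (last zs)) \<le> chain_cost M d S zs"
    if "zs \<noteq> []" "set zs \<subseteq> Mset \<times> M" for zs
    using that
  proof (induction zs rule: induct_list012)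
    case (2 x)
    then show ?case using short[of x x] tens_rel_refl[of x M S] by (simp add: tens_step_def)
  next
    case (3 x y zs)
    let ?l = "last (y # zs)"
    have "x \<in> Mset \<times> M" "y \<in> Mset \<times> M" "?l \<in> Mset \<times> M"
      using "3.prems" last_in_set[of "y # zs"] by auto
    then have "e (g x) (g ?l) \<le> e (g x) (g y) + e (g y) (g ?l)"
      using g by (intro Metric_space.triangle[OF Y]) auto
    then show ?case using 3 short[of x y] by simp
  qed simp
  show ?thesis
  proof (rule tens_dist_greatest[OF A B])
    fix zs assume zs: "zs \<in> tens_chains M A B"
    have "a \<in> Mset \<times> M" "b \<in> Mset \<times> M"
      using \<open>a \<in> A\<close> \<open>b \<in> B\<close> A B unfolding tens_carrier_def tens_class_def tens_rel_def by auto
    moreover have "tens_rel M S a (hd zs)" "tens_rel M S (last zs) b"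
      using zs \<open>a \<in> A\<close> \<open>b \<in> B\<close> A B tens_rel_in_class unfolding tens_chains_def by blast+
    ultimately have "chain_cost M d S (a # zs @ [b]) = chain_cost M d S zs"
      using zs chain_cost_append[of "a # zs" "[b]"] unfolding tens_chains_def
      by (cases zs) (simp_all add: tens_step_def)
    then show "e (g a) (g b) \<le> chain_cost M d S zs"
      using chain[of "a # zs @ [b]"] zs \<open>a \<in> Mset \<times> M\<close> \<open>b \<in> Mset \<times> M\<close>
      unfolding tens_chains_def by simp
  qed
qed

end

section \<open>The algebra map of U0\<close>

interpretation U0: Metric_space U0 dU0
  by unfold_locales (auto simp: dU0_def prod_eq_iff)

lemma dU0_le_2: "p \<in> U0 \<Longrightarrow> q \<in> U0 \<Longrightarrow> dU0 p q \<le> 2"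
  by (cases p, cases q) (auto simp: dU0_def U0_def)

lemma alpha_pre_mem_U0: "z \<in> Mset \<times> U0 \<Longrightarrow> alpha_pre z \<in> U0"
  by (auto simp: Mset_def U0_def alpha_pre_def)

lemma alpha_pre_tens_rel:
  assumes "tens_rel U0 SU0 z w"
  shows "alpha_pre z = alpha_pre w"
proof -
  have "equivclp (tens_gen U0 SU0) z w"
    using assms by (simp add: tens_rel_iff_equivclp)
  then show ?thesis
    by induction (auto simp: tens_gen_def SU0_def alpha_pre_def)
qed

lemma tens_rel_adjacent:
  assumes "m \<in> Mset" "n \<in> Mset" "x \<in> U0" "y \<in> U0"
    and adjacent: "\<bar>fst m - fst n\<bar> + \<bar>snd m - snd n\<bar> = 1"
    and same_image: "alpha_pre (m, x) = alpha_pre (n, y)"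
  shows "tens_rel U0 SU0 (m, x) (n, y)"
proof -
  have shift: "fst x - fst y = of_int (fst n - fst m)" "snd x - snd y = of_int (snd n - snd m)"
    using same_image by (auto simp: alpha_pre_def)
  have "\<bar>fst n - fst m\<bar> = 1 \<or> \<bar>snd n - snd m\<bar> = 1"
    using adjacent by arith
  then have "\<bar>fst x - fst y\<bar> = 1 \<or> \<bar>snd x - snd y\<bar> = 1"
    unfolding shift by (metis of_int_1 of_int_abs)
  then have "x \<in> M0" "y \<in> M0"
    using \<open>x \<in> U0\<close> \<open>y \<in> U0\<close> by (auto simp: M0_def U0_def)
  then have "tens_gen U0 SU0 (m, x) (n, y)"
    using assms unfolding tens_gen_def SU0_def alpha_pre_def by auto
  then show ?thesis
    using assms by (auto simp: tens_rel_iff_equivclp)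
qed

text \<open>Diagonal neighbours are linked through one of the two other corners of their common
  2x2 block; at most one of these is the missing centre cell.\<close>
lemma tens_rel_if_alpha_pre_eq:
  assumes z: "z \<in> Mset \<times> U0" and w: "w \<in> Mset \<times> U0"
    and same_image: "alpha_pre z = alpha_pre w"
  shows "tens_rel U0 SU0 z w"
proof -
  obtain m x n y where zw: "z = (m, x)" "w = (n, y)" and mn: "m \<in> Mset" "n \<in> Mset"
    and xy: "x \<in> U0" "y \<in> U0"
    using z w by auto
  have shift: "fst x - fst y = of_int (fst n - fst m)" "snd x - snd y = of_int (snd n - snd m)"
    using same_image unfolding zw by (auto simp: alpha_pre_def)
  have "\<bar>fst x - fst y\<bar> \<le> 1" "\<bar>snd x - snd y\<bar> \<le> 1"
    using xy by (auto simp: U0_def)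
  then have "\<bar>fst n - fst m\<bar> \<le> 1" "\<bar>snd n - snd m\<bar> \<le> 1"
    unfolding shift by linarith+
  then consider (same) "m = n"
    | (adjacent) "\<bar>fst m - fst n\<bar> + \<bar>snd m - snd n\<bar> = 1"
    | (diagonal) "\<bar>fst m - fst n\<bar> = 1" "\<bar>snd m - snd n\<bar> = 1"
    unfolding prod_eq_iff by arith
  then show ?thesis
  proof cases
    case same
    then have "x = y" using shift by (simp add: prod_eq_iff)
    then show ?thesis using same z zw tens_rel_refl[of z U0 SU0] by simp
  next
    case adjacent
    then show ?thesis using tens_rel_adjacent mn xy same_image zw by simp
  next
    case diagonal
    obtain k u where ku: "k \<in> Mset" "u \<in> U0" and image: "alpha_pre (k, u) = alpha_pre (m, x)"
      and "\<bar>fst m - fst k\<bar> + \<bar>snd m - snd k\<bar> = 1" "\<bar>fst k - fst n\<bar> + \<bar>snd k - snd n\<bar> = 1"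
    proof (cases "(fst m, snd n) \<in> Mset")
      case True
      show thesis
        by (rule that[OF True, of "(fst x, snd y)"])
          (use xy shift diagonal in \<open>auto simp: U0_def alpha_pre_def\<close>)
    next
      case False
      then have "(fst n, snd m) \<in> Mset"
        using mn diagonal by (auto simp: Mset_def)
      then show thesis
        by (rule that[of _ "(fst y, snd x)"])
          (use xy shift diagonal in \<open>auto simp: U0_def alpha_pre_def\<close>)
    qed
    then have "tens_rel U0 SU0 (m, x) (k, u)" "tens_rel U0 SU0 (k, u) (n, y)"
      using tens_rel_adjacent ku mn xy image same_image zw by simp_all
    then show ?thesis using zw tens_rel_trans by blast
  qed
qed

lemma tens_rel_U0_iff:
  "z \<in> Mset \<times> U0 \<Longrightarrow> w \<in> Mset \<times> U0 \<Longrightarrow> tens_rel U0 SU0 z w \<longleftrightarrow> alpha_pre z = alpha_pre w"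
  using alpha_pre_tens_rel tens_rel_if_alpha_pre_eq by blast

lemma alpha_M_tens_class:
  assumes "z \<in> Mset \<times> U0"
  shows "alpha_M (tens_class U0 SU0 z) = alpha_pre z"
proof -
  have "(SOME w. w \<in> tens_class U0 SU0 z) \<in> tens_class U0 SU0 z"
    using tens_class_self[OF assms] by (rule someI)
  then show ?thesis
    unfolding alpha_M_def by (metis alpha_pre_tens_rel mem_tens_class_iff)
qed

lemma alpha_M_eq_alpha_pre:
  assumes "A \<in> tens_carrier U0 SU0" "z \<in> A"
  shows "alpha_M A = alpha_pre z"
  using assms by (elim tens_carrierE) (metis alpha_M_tens_class alpha_pre_tens_rel mem_tens_class_iff)

lemma alpha_M_mem_U0: "A \<in> tens_carrier U0 SU0 \<Longrightarrow> alpha_M A \<in> U0"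
  unfolding tens_carrier_def by (auto simp: alpha_M_tens_class alpha_pre_mem_U0)

lemma inj_on_alpha_M: "inj_on alpha_M (tens_carrier U0 SU0)"
proof (rule inj_onI)
  fix A B assume A: "A \<in> tens_carrier U0 SU0" and B: "B \<in> tens_carrier U0 SU0"
    and "alpha_M A = alpha_M B"
  obtain z w where "z \<in> Mset \<times> U0" "A = tens_class U0 SU0 z" "w \<in> Mset \<times> U0" "B = tens_class U0 SU0 w"
    using A B by (metis tens_carrierE)
  with \<open>alpha_M A = alpha_M B\<close> show "A = B"
    by (metis alpha_M_tens_class tens_class_eq tens_rel_if_alpha_pre_eq)
qed

lemma dU0_alpha_pre_le_tens_step:
  assumes a: "a \<in> Mset \<times> U0" and b: "b \<in> Mset \<times> U0"
  shows "dU0 (alpha_pre a) (alpha_pre b) \<le> tens_step U0 dU0 SU0 a b"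
proof -
  have "dU0 (alpha_pre a) (alpha_pre b) = 0" if "alpha_pre a = alpha_pre b"
    using that by (simp add: dU0_def)
  moreover have "dU0 (alpha_pre a) (alpha_pre b) = dU0 (snd a) (snd b) / 3" if "fst a = fst b"
    using that by (simp add: dU0_def alpha_pre_def diff_divide_distrib[symmetric])
  moreover have "dU0 (alpha_pre a) (alpha_pre b) \<le> 2"
    using a b by (simp add: alpha_pre_mem_U0 dU0_le_2)
  ultimately show ?thesis
    using tens_rel_U0_iff[OF a b] by (simp add: tens_step_def tens_base_def)
qed

lemma dU0_alpha_M_le_tens_dist:
  assumes A: "A \<in> tens_carrier U0 SU0" and B: "B \<in> tens_carrier U0 SU0"
  shows "dU0 (alpha_M A) (alpha_M B) \<le> tens_dist U0 dU0 SU0 A B"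
proof -
  obtain a b where "a \<in> A" "b \<in> B"
    using A B by (metis tens_carrierE)
  moreover have "dU0 (alpha_pre a) (alpha_pre b) \<le> tens_dist U0 dU0 SU0 A B"
    using U0.tens_dist_lower_bound[OF U0.Metric_space_axioms _ dU0_alpha_pre_le_tens_step A B]
      alpha_pre_mem_U0 calculation by blast
  ultimately show ?thesis using alpha_M_eq_alpha_pre A B by metis
qed

lemma Metric_space_tens_U0: "Metric_space (tens_carrier U0 SU0) (tens_dist U0 dU0 SU0)"
proof
  fix A B C
  show "0 \<le> tens_dist U0 dU0 SU0 A B" by (rule U0.tens_dist_nonneg)
  show "tens_dist U0 dU0 SU0 A B = tens_dist U0 dU0 SU0 B A" by (rule U0.tens_dist_commute)
  assume A: "A \<in> tens_carrier U0 SU0" and B: "B \<in> tens_carrier U0 SU0"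
  show "tens_dist U0 dU0 SU0 A B = 0 \<longleftrightarrow> A = B"
  proof
    assume "tens_dist U0 dU0 SU0 A B = 0"
    then have "alpha_M A = alpha_M B"
      using dU0_alpha_M_le_tens_dist[OF A B] U0.zero[OF alpha_M_mem_U0[OF A] alpha_M_mem_U0[OF B]]
      by (metis U0.nonneg order_antisym)
    then show "A = B" using inj_on_alpha_M A B by (meson inj_onD)
  qed (simp add: U0.tens_dist_self B)
  assume "C \<in> tens_carrier U0 SU0"
  then show "tens_dist U0 dU0 SU0 A C \<le> tens_dist U0 dU0 SU0 A B + tens_dist U0 dU0 SU0 B C"
    using A B by (rule U0.tens_dist_triangle[rotated 2])
qed

definition cell_coord :: "int \<times> int \<Rightarrow> real \<times> real \<Rightarrow> real \<times> real" where
  "cell_coord m p = (3 * fst p - real_of_int (fst m), 3 * snd p - real_of_int (snd m))"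

lemma alpha_pre_cell_coord: "alpha_pre (m, cell_coord m p) = p"
  by (simp add: alpha_pre_def cell_coord_def)

lemma tens_S_U0:
  assumes "m \<in> Mset" "cell_coord m p \<in> U0"
  shows "tens_S U0 SU0 p = tens_class U0 SU0 (m, cell_coord m p)"
proof -
  define m' where "m' = (SOME m. m \<in> Mset \<and> cell_coord m p \<in> U0)"
  have m': "m' \<in> Mset \<and> cell_coord m' p \<in> U0"
    unfolding m'_def by (rule someI[where x = m]) (simp add: assms)
  have in_cell_iff:
    "(k \<in> Mset \<and> 0 \<le> 3 * fst p - real_of_int (fst k) \<and> 3 * fst p - real_of_int (fst k) \<le> 1 \<and>
      0 \<le> 3 * snd p - real_of_int (snd k) \<and> 3 * snd p - real_of_int (snd k) \<le> 1) \<longleftrightarrow>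
      k \<in> Mset \<and> cell_coord k p \<in> U0" for k
    by (auto simp: cell_coord_def U0_def)
  have "tens_S U0 SU0 p = tens_class U0 SU0 (m', cell_coord m' p)"
    unfolding tens_S_def Let_def SU0_def in_cell_iff m'_def by (simp only: cell_coord_def)
  also have "\<dots> = tens_class U0 SU0 (m, cell_coord m p)"
    using m' assms by (intro tens_class_eq) (simp add: tens_rel_U0_iff alpha_pre_cell_coord)
  finally show ?thesis .
qed

lemma boundary_in_cell:
  assumes "p \<in> M0"
  obtains m where "m \<in> Mset" "cell_coord m p \<in> U0"
proof -
  define k :: "real \<Rightarrow> int" where "k t = (if t \<le> 1/3 then 0 else if t \<le> 2/3 then 1 else 2)" for t
  have p: "fst p \<in> {0..1}" "snd p \<in> {0..1}" "fst p \<in> {0, 1} \<or> snd p \<in> {0, 1}"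
    using assms by (auto simp: M0_def)
  have range: "k t \<in> {0..2}" for t
    by (simp add: k_def)
  have not_middle: "k t \<noteq> 1" if "t \<in> {0, 1}" for t
    using that by (auto simp: k_def)
  have coord: "3 * t - k t \<in> {0..1}" if "t \<in> {0..1}" for t
    using that by (simp add: k_def)
  have "(k (fst p), k (snd p)) \<in> Mset"
    using p(3) range not_middle by (auto simp: Mset_def)
  moreover have "cell_coord (k (fst p), k (snd p)) p \<in> U0"
    using p(1,2) coord by (simp add: cell_coord_def U0_def)
  ultimately show thesis by (rule that)
qed

lemma tens_S_mem_tens_carrier: "p \<in> M0 \<Longrightarrow> tens_S U0 SU0 p \<in> tens_carrier U0 SU0"
  by (elim boundary_in_cell) (auto simp: tens_S_U0 tens_carrier_def)

lemma alpha_M_tens_S: "p \<in> M0 \<Longrightarrow> alpha_M (tens_S U0 SU0 p) = p"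
  by (elim boundary_in_cell) (simp add: tens_S_U0 alpha_M_tens_class alpha_pre_cell_coord)

lemma tens_dist_tens_S_same_cell_le:
  assumes "m \<in> Mset" "cell_coord m p \<in> U0" "cell_coord m q \<in> U0"
  shows "tens_dist U0 dU0 SU0 (tens_S U0 SU0 p) (tens_S U0 SU0 q) \<le> dU0 p q"
proof -
  have "\<bar>3 * x - 3 * y\<bar> = 3 * \<bar>x - y\<bar>" for x y :: real
    by (simp add: abs_if)
  then have "dU0 (cell_coord m p) (cell_coord m q) = 3 * dU0 p q"
    by (simp add: dU0_def cell_coord_def)
  then show ?thesis
    using U0.tens_dist_tens_class_le[OF assms, of SU0] assms by (simp add: tens_S_U0)
qed

lemma le_diff_interval_join:
  fixes f :: "real \<Rightarrow> real \<Rightarrow> real"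
  assumes triangle: "\<And>a b c. a \<in> {x..z} \<Longrightarrow> b \<in> {x..z} \<Longrightarrow> c \<in> {x..z} \<Longrightarrow> f a c \<le> f a b + f b c"
    and left: "\<And>a b. x \<le> a \<Longrightarrow> a \<le> b \<Longrightarrow> b \<le> y \<Longrightarrow> f a b \<le> b - a"
    and right: "\<And>a b. y \<le> a \<Longrightarrow> a \<le> b \<Longrightarrow> b \<le> z \<Longrightarrow> f a b \<le> b - a"
    and "x \<le> a" "a \<le> b" "b \<le> z"
  shows "f a b \<le> b - a"
proof -
  consider "b \<le> y" | "y \<le> a" | "a < y" "y < b" by linarith
  then show ?thesis
  proof cases
    case 3
    have "f a b \<le> f a y + f y b" by (rule triangle) (use 3 assms in auto)
    moreover have "f a y \<le> y - a" "f y b \<le> b - y" using left right 3 assms by simp_all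
    ultimately show ?thesis by linarith
  qed (use left right assms in auto)
qed

lemma le_abs_diff_by_thirds:
  fixes f :: "real \<Rightarrow> real \<Rightarrow> real"
  assumes triangle: "\<And>a b c. a \<in> {0..1} \<Longrightarrow> b \<in> {0..1} \<Longrightarrow> c \<in> {0..1} \<Longrightarrow> f a c \<le> f a b + f b c"
    and commute: "\<And>a b. f a b = f b a"
    and thirds: "\<And>k a b. k \<in> {0, 1, 2} \<Longrightarrow> real_of_int k / 3 \<le> a \<Longrightarrow> a \<le> b \<Longrightarrow>
                   b \<le> (real_of_int k + 1) / 3 \<Longrightarrow> f a b \<le> b - a"
    and "r \<in> {0..1}" "s \<in> {0..1}"
  shows "f r s \<le> \<bar>s - r\<bar>"
proof -
  have third0: "f a b \<le> b - a" if "0 \<le> a" "a \<le> b" "b \<le> 1/3" for a b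
    using thirds[of 0 a b] that by simp
  have third1: "f a b \<le> b - a" if "1/3 \<le> a" "a \<le> b" "b \<le> 2/3" for a b
    using thirds[of 1 a b] that by simp
  have third2: "f a b \<le> b - a" if "2/3 \<le> a" "a \<le> b" "b \<le> 1" for a b
    using thirds[of 2 a b] that by simp
  have first_two_thirds: "f a b \<le> b - a" if "0 \<le> a" "a \<le> b" "b \<le> 2/3" for a b
  proof (rule le_diff_interval_join[of 0 "2/3" f "1/3", OF _ third0 third1 that])
    show "f a' c \<le> f a' b' + f b' c"
      if "a' \<in> {0..2/3}" "b' \<in> {0..2/3}" "c \<in> {0..2/3}" for a' b' c
      using that by (intro triangle) auto
  qed
  have ordered: "f a b \<le> b - a" if "0 \<le> a" "a \<le> b" "b \<le> 1" for a b
    using le_diff_interval_join[of 0 1 f "2/3", OF triangle first_two_thirds third2 that] .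
  show ?thesis
    using ordered[of r s] ordered[of s r] commute[of r s] assms(4,5) by (cases "r \<le> s") auto
qed

lemma tens_dist_tens_S_path_le:
  assumes on_boundary: "\<And>t. t \<in> {0..1} \<Longrightarrow> \<gamma> t \<in> M0"
    and length: "\<And>a b. dU0 (\<gamma> a) (\<gamma> b) = \<bar>b - a\<bar>"
    and thirds_in_cells: "\<And>k. k \<in> {0, 1, 2} \<Longrightarrow>
           \<exists>m\<in>Mset. \<forall>t \<in> {real_of_int k / 3 .. (real_of_int k + 1) / 3}. cell_coord m (\<gamma> t) \<in> U0"
    and "r \<in> {0..1}" "s \<in> {0..1}"
  shows "tens_dist U0 dU0 SU0 (tens_S U0 SU0 (\<gamma> r)) (tens_S U0 SU0 (\<gamma> s)) \<le> \<bar>s - r\<bar>"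
    (is "?f r s \<le> _")
proof (rule le_abs_diff_by_thirds[where f = ?f])
  show "?f a c \<le> ?f a b + ?f b c" if "a \<in> {0..1}" "b \<in> {0..1}" "c \<in> {0..1}" for a b c
    by (intro U0.tens_dist_triangle tens_S_mem_tens_carrier on_boundary that)
  show "?f a b = ?f b a" for a b
    by (rule U0.tens_dist_commute)
  show "?f a b \<le> b - a"
    if k: "k \<in> {0, 1, 2}" and ab: "real_of_int k / 3 \<le> a" "a \<le> b" "b \<le> (real_of_int k + 1) / 3"
    for k a b
  proof -
    obtain m where "m \<in> Mset" "cell_coord m (\<gamma> a) \<in> U0" "cell_coord m (\<gamma> b) \<in> U0"
      using thirds_in_cells[OF k] ab by auto
    then have "?f a b \<le> dU0 (\<gamma> a) (\<gamma> b)"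
      by (rule tens_dist_tens_S_same_cell_le)
    then show ?thesis using length ab by simp
  qed
qed (use assms in auto)

lemma tens_dist_tens_S_edge_le:
  assumes "i \<in> {0, 1}" "r \<in> {0..1}" "s \<in> {0..1}"
  shows "tens_dist U0 dU0 SU0 (tens_S U0 SU0 (i, r)) (tens_S U0 SU0 (i, s)) \<le> \<bar>s - r\<bar>"
    and "tens_dist U0 dU0 SU0 (tens_S U0 SU0 (r, i)) (tens_S U0 SU0 (s, i)) \<le> \<bar>s - r\<bar>"
proof -
  define j :: int where "j = (if i = 0 then 0 else 2)"
  have cells: "(j, k) \<in> Mset" "(k, j) \<in> Mset" if "k \<in> {0, 1, 2}" for k
    using that by (auto simp: j_def Mset_def)
  have thirds: "cell_coord (j, k) (i, t) \<in> U0" "cell_coord (k, j) (t, i) \<in> U0"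
    if "t \<in> {real_of_int k / 3 .. (real_of_int k + 1) / 3}" for k t
    using assms(1) that by (auto simp: j_def cell_coord_def U0_def)
  have vertical_cells:
    "\<exists>m\<in>Mset. \<forall>t \<in> {real_of_int k / 3 .. (real_of_int k + 1) / 3}. cell_coord m (i, t) \<in> U0"
    if "k \<in> {0, 1, 2}" for k
    by (intro bexI[OF _ cells(1)[OF that]] ballI thirds(1))
  have horizontal_cells:
    "\<exists>m\<in>Mset. \<forall>t \<in> {real_of_int k / 3 .. (real_of_int k + 1) / 3}. cell_coord m (t, i) \<in> U0"
    if "k \<in> {0, 1, 2}" for k
    by (intro bexI[OF _ cells(2)[OF that]] ballI thirds(2))
  show "tens_dist U0 dU0 SU0 (tens_S U0 SU0 (i, r)) (tens_S U0 SU0 (i, s)) \<le> \<bar>s - r\<bar>"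
  proof (rule tens_dist_tens_S_path_le[OF _ _ vertical_cells assms(2,3)])
    show "(i, t) \<in> M0" if "t \<in> {0..1}" for t using assms(1) that by (auto simp: M0_def)
    show "dU0 (i, a) (i, b) = \<bar>b - a\<bar>" for a b by (simp add: dU0_def abs_minus_commute)
  qed
  show "tens_dist U0 dU0 SU0 (tens_S U0 SU0 (r, i)) (tens_S U0 SU0 (s, i)) \<le> \<bar>s - r\<bar>"
  proof (rule tens_dist_tens_S_path_le[OF _ _ horizontal_cells assms(2,3)])
    show "(t, i) \<in> M0" if "t \<in> {0..1}" for t using assms(1) that by (auto simp: M0_def)
    show "dU0 (a, i) (b, i) = \<bar>b - a\<bar>" for a b by (simp add: dU0_def abs_minus_commute)
  qed
qed

lemma dU0_le_tens_dist_tens_S: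
  "p \<in> M0 \<Longrightarrow> q \<in> M0 \<Longrightarrow> dU0 p q \<le> tens_dist U0 dU0 SU0 (tens_S U0 SU0 p) (tens_S U0 SU0 q)"
  using dU0_alpha_M_le_tens_dist[OF tens_S_mem_tens_carrier tens_S_mem_tens_carrier]
  by (simp add: alpha_M_tens_S)

lemma square_metric_space_U0: "square_metric_space U0 dU0 SU0"
  unfolding square_metric_space_def
proof (intro conjI)
  show "inj_on SU0 M0" "SU0 ` M0 \<subseteq> U0"
    by (auto simp: SU0_def inj_on_def M0_def U0_def)
qed (use U0.Metric_space_axioms dU0_le_2 in \<open>auto simp: SU0_def dU0_def abs_minus_commute\<close>)

lemma square_metric_space_tens_U0:
  "square_metric_space (tens_carrier U0 SU0) (tens_dist U0 dU0 SU0) (tens_S U0 SU0)"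
  unfolding square_metric_space_def
proof (intro conjI ballI)
  show "Metric_space (tens_carrier U0 SU0) (tens_dist U0 dU0 SU0)"
    by (rule Metric_space_tens_U0)
  show "tens_dist U0 dU0 SU0 A B \<le> 2" if "A \<in> tens_carrier U0 SU0" "B \<in> tens_carrier U0 SU0" for A B
    using U0.tens_dist_le_2[OF _ that] dU0_le_2 by fastforce
  show "tens_S U0 SU0 ` M0 \<subseteq> tens_carrier U0 SU0"
    using tens_S_mem_tens_carrier by blast
  show "inj_on (tens_S U0 SU0) M0"
    using alpha_M_tens_S by (rule inj_on_inverseI)
  fix i r s :: real assume i: "i \<in> {0, 1}" and r: "r \<in> {0..1}" and s: "s \<in> {0..1}"
  have M0: "(i, r) \<in> M0" "(i, s) \<in> M0" "(r, i) \<in> M0" "(s, i) \<in> M0"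
    using i r s by (auto simp: M0_def)
  have "\<bar>s - r\<bar> \<le> tens_dist U0 dU0 SU0 (tens_S U0 SU0 (i, r)) (tens_S U0 SU0 (i, s))"
    using dU0_le_tens_dist_tens_S[OF M0(1,2)] by (simp add: dU0_def abs_minus_commute)
  then show "tens_dist U0 dU0 SU0 (tens_S U0 SU0 (i, r)) (tens_S U0 SU0 (i, s)) = \<bar>s - r\<bar>"
    using tens_dist_tens_S_edge_le(1)[OF i r s] by linarith
  have "\<bar>s - r\<bar> \<le> tens_dist U0 dU0 SU0 (tens_S U0 SU0 (r, i)) (tens_S U0 SU0 (s, i))"
    using dU0_le_tens_dist_tens_S[OF M0(3,4)] by (simp add: dU0_def abs_minus_commute)
  then show "tens_dist U0 dU0 SU0 (tens_S U0 SU0 (r, i)) (tens_S U0 SU0 (s, i)) = \<bar>s - r\<bar>"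
    using tens_dist_tens_S_edge_le(2)[OF i r s] by linarith
next
  fix p q assume "p \<in> M0" "q \<in> M0"
  then show "\<bar>fst p - fst q\<bar> + \<bar>snd p - snd q\<bar> \<le> tens_dist U0 dU0 SU0 (tens_S U0 SU0 p) (tens_S U0 SU0 q)"
    using dU0_le_tens_dist_tens_S by (simp add: dU0_def)
qed

theorem mainTheorem14:
  shows "(\<forall>z w. tens_rel U0 SU0 z w \<longrightarrow> alpha_pre z = alpha_pre w)
       \<and> (\<forall>z \<in> Mset \<times> U0. alpha_M (tens_class U0 SU0 z) = alpha_pre z)
       \<and> squams_morphism (tens_carrier U0 SU0) (tens_dist U0 dU0 SU0) (tens_S U0 SU0)
                          U0 dU0 SU0 alpha_M
       \<and> inj_on alpha_M (tens_carrier U0 SU0)"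
proof (intro conjI)
  show "squams_morphism (tens_carrier U0 SU0) (tens_dist U0 dU0 SU0) (tens_S U0 SU0)
                          U0 dU0 SU0 alpha_M"
    unfolding squams_morphism_def
  proof (intro conjI ballI)
    show "alpha_M ` tens_carrier U0 SU0 \<subseteq> U0" using alpha_M_mem_U0 by blast
    show "alpha_M (tens_S U0 SU0 p) = SU0 p" if "p \<in> M0" for p
      using alpha_M_tens_S[OF that] by (simp add: SU0_def)
  qed (simp_all add: square_metric_space_tens_U0 square_metric_space_U0 dU0_alpha_M_le_tens_dist)
qed (use alpha_pre_tens_rel alpha_M_tens_class inj_on_alpha_M in auto)

end
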